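(* Let $q\in\mathrm{prob}(\{0,1\}^2)$. The set $E:=\{(\pi_1,\chi^{(2)}_{1|1}):(\pi,\chi)\in\Theta_2,\ \mu(\pi,\chi)=q\}$ is nonempty and equals the set of all $(\mathrm{Pr},\mathrm{Se}_2)\in[0,1]^2$ satisfying $\mathrm{Pr}-q_{+0}\le\mathrm{Pr}\,\mathrm{Se}_2\le q_{+1}$.
   Context: A subscript $+$ denotes summation over the replaced index: $q_{+0}=q_{00}+q_{10}$, $q_{+1}=q_{01}+q_{11}$. $\mathrm{prob}(\mathcal{X})$ is the set of probability densities on a finite set $\mathcal{X}$; $\mathrm{markov}(\mathcal{X},\mathcal{Y})$ the set of maps $(x,y)\mapsto p_{y|x}$ with $p_{\cdot|x}\in\mathrm{prob}(\mathcal{Y})$. $\Theta_2:=\mathrm{prob}(\{0,1\})\times\mathrm{markov}(\{0,1\},\{0,1\}^2)$, $\mu(\pi,\chi)_j:=\sum_{i=0}^1\pi_i\chi_{j|i}$ for $j\in\{0,1\}^2$, $\chi^{(2)}_{\iota|i}:=\chi_{0\iota|i}+\chi_{1\iota|i}$. *)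

theory Defs
  imports Main "HOL-Library.Product_Plus" Complex_Main
begin

text \<open>prob(X): probability densities on a finite set X (only values on X matter).\<close>
definition prob_dens :: "'a set \<Rightarrow> ('a \<Rightarrow> real) \<Rightarrow> bool" where
  "prob_dens X p \<longleftrightarrow> (\<forall>x\<in>X. 0 \<le> p x) \<and> (\<Sum>x\<in>X. p x) = 1"

text \<open>markov(X,Y): maps (x,y) to p(y|x), written k x y, with k x in prob(Y) for x in X.\<close>
definition markov :: "'a set \<Rightarrow> 'b set \<Rightarrow> ('a \<Rightarrow> 'b \<Rightarrow> real) \<Rightarrow> bool" where
  "markov X Y k \<longleftrightarrow> (\<forall>x\<in>X. prob_dens Y (k x))"

definition bits :: "nat set" where "bits = {0, 1}"

definition Theta2 :: "((nat \<Rightarrow> real) \<times> (nat \<Rightarrow> nat \<times> nat \<Rightarrow> real)) set" where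
  "Theta2 = {(\<pi>, \<chi>). prob_dens bits \<pi> \<and> markov bits (bits \<times> bits) \<chi>}"

definition mu :: "(nat \<Rightarrow> real) \<Rightarrow> (nat \<Rightarrow> nat \<times> nat \<Rightarrow> real) \<Rightarrow> nat \<times> nat \<Rightarrow> real" where
  "mu \<pi> \<chi> j = (\<Sum>i\<in>bits. \<pi> i * \<chi> i j)"

definition chi2 :: "(nat \<Rightarrow> nat \<times> nat \<Rightarrow> real) \<Rightarrow> nat \<Rightarrow> nat \<Rightarrow> real" where
  "chi2 \<chi> \<iota> i = \<chi> i (0, \<iota>) + \<chi> i (1, \<iota>)"

end

theory Submission
  imports Defs
begin

text \<open>Write P for \<open>\<pi>\<^sub>1\<close> and S for \<open>chi2 \<chi> 1 1\<close>. As \<open>q = (1 - P) \<chi>(\<cdot>|0) + P \<chi>(\<cdot>|1)\<close> with nonnegative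
  terms, \<open>P \<chi>(j|1) \<le> q j\<close>; summing over the two fibres of the second coordinate gives
  \<open>P S \<le> q\<^sub>+\<^sub>1\<close> and \<open>P (1 - S) \<le> q\<^sub>+\<^sub>0\<close>. Conversely, any density x with \<open>P x \<le> q\<close> is the
  P-weighted component of a mixture representing q, and such an x with mass S on the fibre
  \<open>\<iota> = 1\<close> is obtained by spreading S and 1 - S over the two fibres proportionally to q.\<close>

lemma sum_bits: "(\<Sum>i\<in>bits. f i) = f 0 + f (1::nat)"
  by (simp add: bits_def)

lemma bits_times_bits: "bits \<times> bits = {(0,0), (0,1), (1,0), (1::nat, 1::nat)}"
  by (auto simp: bits_def)

lemma prob_dens_bits: "prob_dens bits \<pi> \<longleftrightarrow> 0 \<le> \<pi> 0 \<and> 0 \<le> \<pi> (1::nat) \<and> \<pi> 0 + \<pi> 1 = 1"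
  by (auto simp: prob_dens_def sum_bits bits_def)

lemma markov_bits: "markov bits Y k \<longleftrightarrow> prob_dens Y (k 0) \<and> prob_dens Y (k (1::nat))"
  by (auto simp: markov_def bits_def)

lemma mu_bits: "mu \<pi> \<chi> j = \<pi> 0 * \<chi> 0 j + \<pi> 1 * \<chi> 1 j"
  by (simp add: mu_def sum_bits)

lemma prob_dens_nonneg: "prob_dens X p \<Longrightarrow> x \<in> X \<Longrightarrow> 0 \<le> p x"
  by (simp add: prob_dens_def)

lemma prob_dens_sum: "prob_dens X p \<Longrightarrow> sum p X = 1"
  by (simp add: prob_dens_def)

lemma mixture_component_le:
  assumes "prob_dens bits \<pi>" "prob_dens X (\<chi> 0)" "j \<in> X"
  shows "\<pi> 1 * \<chi> 1 j \<le> mu \<pi> \<chi> j"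
  using assms by (simp add: mu_bits prob_dens_bits prob_dens_nonneg)

text \<open>If \<open>P = 1\<close>, the bound \<open>x \<le> q\<close> between two densities forces \<open>x = q\<close>, and any \<open>y\<close> will do.\<close>
lemma mixture_complement_exists:
  fixes q x :: "'a \<Rightarrow> real" and P :: real
  assumes "finite X" "prob_dens X q" "prob_dens X x" "0 \<le> P" "P \<le> 1"
    and le: "\<And>j. j \<in> X \<Longrightarrow> P * x j \<le> q j"
  obtains y where "prob_dens X y" "\<And>j. j \<in> X \<Longrightarrow> (1 - P) * y j + P * x j = q j"
proof (cases "P < 1")
  case True
  define y where "y j = (q j - P * x j) / (1 - P)" for j
  have "sum y X = (sum q X - P * sum x X) / (1 - P)"
    by (simp add: y_def sum_divide_distrib[symmetric] sum_subtractf sum_distrib_left)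
  then have "prob_dens X y"
    using True le assms(2,3) by (simp add: prob_dens_def y_def)
  moreover have "(1 - P) * y j + P * x j = q j" for j
    using True by (simp add: y_def)
  ultimately show ?thesis
    by (rule that)
next
  case False
  then have "P = 1" using \<open>P \<le> 1\<close> by simp
  have "(\<Sum>j\<in>X. q j - x j) = 0"
    using assms(2,3) by (simp add: sum_subtractf prob_dens_sum)
  then have "\<forall>j\<in>X. q j - x j = 0"
    using le \<open>P = 1\<close> \<open>finite X\<close> by (subst sum_nonneg_eq_0_iff[symmetric]) auto
  then show ?thesis
    using \<open>P = 1\<close> assms(3) by (intro that) auto
qed

text \<open>When \<open>q\<close> has no mass on \<open>A\<close>, this falls back to the point mass at \<open>a\<close>.\<close>
definition cond_dens :: "'a set \<Rightarrow> 'a \<Rightarrow> ('a \<Rightarrow> real) \<Rightarrow> 'a \<Rightarrow> real" where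
  "cond_dens A a q j = (if 0 < sum q A then q j / sum q A else if j = a then 1 else 0)"

lemma prob_dens_cond_dens:
  assumes "finite A" "a \<in> A" "\<And>j. j \<in> A \<Longrightarrow> 0 \<le> q j"
  shows "prob_dens A (cond_dens A a q)"
proof (cases "0 < sum q A")
  case True
  then show ?thesis
    using assms by (simp add: prob_dens_def cond_dens_def sum_divide_distrib[symmetric])
next
  case False
  then show ?thesis
    using assms by (simp add: prob_dens_def cond_dens_def)
qed

lemma scaled_cond_dens_le:
  assumes "finite A" "j \<in> A" "\<And>j. j \<in> A \<Longrightarrow> 0 \<le> q j" "0 \<le> c" "c \<le> sum q A"
  shows "c * cond_dens A a q j \<le> q j"
proof (cases "0 < sum q A")
  case True
  have "c * (q j / sum q A) \<le> sum q A * (q j / sum q A)"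
    using assms by (intro mult_right_mono) auto
  then show ?thesis
    using True by (simp add: cond_dens_def)
next
  case False
  then have "c = 0" using assms by linarith
  then show ?thesis using assms by simp
qed

lemma prob_dens_glue:
  assumes "finite A" "finite B" "A \<inter> B = {}" "prob_dens A u" "prob_dens B v"
    "0 \<le> S" "S \<le> 1"
  defines "w \<equiv> \<lambda>j. if j \<in> A then S * u j else (1 - S) * v j"
  shows "prob_dens (A \<union> B) w" and "sum w A = S"
proof -
  have wA: "sum w A = S * sum u A" and wB: "sum w B = (1 - S) * sum v B"
    using assms(3) by (auto simp: w_def sum_distrib_left intro!: sum.cong)
  then show "sum w A = S" using assms(4) by (simp add: prob_dens_sum)
  show "prob_dens (A \<union> B) w"
    using assms wA wB by (auto simp: prob_dens_def sum.union_disjoint w_def)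
qed

definition fibre :: "nat \<Rightarrow> (nat \<times> nat) set" where
  "fibre \<iota> = bits \<times> {\<iota>}"

lemma finite_fibre: "finite (fibre \<iota>)"
  by (simp add: fibre_def bits_def)

lemma sum_fibre: "sum f (fibre \<iota>) = f (0, \<iota>) + f (1, \<iota>)"
  by (simp add: fibre_def bits_def)

lemma chi2_eq_sum_fibre: "chi2 \<chi> \<iota> i = sum (\<chi> i) (fibre \<iota>)"
  by (simp add: chi2_def sum_fibre)

lemma bits_times_bits_fibres: "bits \<times> bits = fibre 1 \<union> fibre 0"
  by (auto simp: fibre_def bits_def)

lemma identified_set_necessary:
  assumes "(\<pi>, \<chi>) \<in> Theta2" "\<forall>j\<in>bits \<times> bits. mu \<pi> \<chi> j = q j"
  shows "\<pi> 1 \<in> {0..1} \<and> chi2 \<chi> 1 1 \<in> {0..1} \<and>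
         \<pi> 1 - (q (0,0) + q (1,0)) \<le> \<pi> 1 * chi2 \<chi> 1 1 \<and>
         \<pi> 1 * chi2 \<chi> 1 1 \<le> q (0,1) + q (1,1)"
proof -
  have \<pi>: "prob_dens bits \<pi>" and \<chi>0: "prob_dens (bits \<times> bits) (\<chi> 0)"
    and \<chi>1: "prob_dens (bits \<times> bits) (\<chi> 1)"
    using assms(1) by (simp_all add: Theta2_def markov_bits)
  have le: "\<pi> 1 * \<chi> 1 j \<le> q j" if "j \<in> bits \<times> bits" for j
    using mixture_component_le[where \<chi> = \<chi>, OF \<pi> \<chi>0 that] assms(2) that by simp
  have complement: "1 - chi2 \<chi> 1 1 = \<chi> 1 (0,0) + \<chi> 1 (1,0)"
    using prob_dens_sum[OF \<chi>1] by (simp add: chi2_def bits_times_bits)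
  have "\<pi> 1 * chi2 \<chi> 1 1 \<le> q (0,1) + q (1,1)"
    using le[of "(0,1)"] le[of "(1,1)"]
    by (simp add: chi2_def distrib_left bits_def)
  moreover have "\<pi> 1 * (1 - chi2 \<chi> 1 1) \<le> q (0,0) + q (1,0)"
    using le[of "(0,0)"] le[of "(1,0)"] complement by (simp add: bits_def distrib_left)
  moreover have "\<pi> 1 \<in> {0..1}"
    using \<pi> by (simp add: prob_dens_bits)
  moreover have "chi2 \<chi> 1 1 \<in> {0..1}"
    using \<chi>1 by (auto simp: prob_dens_def chi2_def bits_times_bits bits_def)
  ultimately show ?thesis
    by (simp add: algebra_simps)
qed

lemma identified_set_sufficient:
  assumes q: "prob_dens (bits \<times> bits) q"
    and P: "P \<in> {0..1}" and S: "S \<in> {0..1}"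
    and lower: "P - (q (0,0) + q (1,0)) \<le> P * S" and upper: "P * S \<le> q (0,1) + q (1,1)"
  shows "\<exists>\<pi> \<chi>. (\<pi>, \<chi>) \<in> Theta2 \<and> (\<forall>j\<in>bits \<times> bits. mu \<pi> \<chi> j = q j) \<and>
               (P, S) = (\<pi> 1, chi2 \<chi> 1 1)"
proof -
  have q_nonneg1: "\<And>j. j \<in> fibre 1 \<Longrightarrow> 0 \<le> q j"
    and q_nonneg0: "\<And>j. j \<in> fibre 0 \<Longrightarrow> 0 \<le> q j"
    using q by (auto simp: prob_dens_def fibre_def bits_def)
  define x where "x j = (if j \<in> fibre 1 then S * cond_dens (fibre 1) (0,1) q j
                         else (1 - S) * cond_dens (fibre 0) (0,0) q j)" for j
  have disjoint: "fibre 1 \<inter> fibre 0 = {}"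
    by (auto simp: fibre_def)
  have dens1: "prob_dens (fibre 1) (cond_dens (fibre 1) (0,1) q)"
    and dens0: "prob_dens (fibre 0) (cond_dens (fibre 0) (0,0) q)"
    by (intro prob_dens_cond_dens finite_fibre q_nonneg1 q_nonneg0; simp add: fibre_def bits_def)+
  have x_dens: "prob_dens (bits \<times> bits) x" and x_mass: "sum x (fibre 1) = S"
    using prob_dens_glue[OF finite_fibre finite_fibre disjoint dens1 dens0] S
    unfolding bits_times_bits_fibres x_def by auto
  have x_le: "P * x j \<le> q j" if "j \<in> bits \<times> bits" for j
  proof (cases "j \<in> fibre 1")
    case True
    then have "P * S * cond_dens (fibre 1) (0,1) q j \<le> q j"
      using P S upper q_nonneg1 by (intro scaled_cond_dens_le finite_fibre) (auto simp: sum_fibre)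
    then show ?thesis using True by (simp add: x_def mult.assoc)
  next
    case False
    then have "j \<in> fibre 0" using that by (auto simp: fibre_def bits_def)
    then have "P * (1 - S) * cond_dens (fibre 0) (0,0) q j \<le> q j"
      using P S lower q_nonneg0 mult_left_le[of S P]
      by (intro scaled_cond_dens_le finite_fibre) (auto simp: sum_fibre algebra_simps)
    then show ?thesis using False by (simp add: x_def mult.assoc)
  qed
  obtain y where y_dens: "prob_dens (bits \<times> bits) y"
    and mix: "\<And>j. j \<in> bits \<times> bits \<Longrightarrow> (1 - P) * y j + P * x j = q j"
    using mixture_complement_exists[OF _ q x_dens _ _ x_le] P
    by (auto simp: bits_times_bits)
  define \<pi> :: "nat \<Rightarrow> real" where "\<pi> i = (if i = 1 then P else 1 - P)" for i
  define \<chi> :: "nat \<Rightarrow> nat \<times> nat \<Rightarrow> real" where "\<chi> i = (if i = 1 then x else y)" for i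
  have "(\<pi>, \<chi>) \<in> Theta2"
    using P x_dens y_dens by (simp add: Theta2_def markov_bits prob_dens_bits \<pi>_def \<chi>_def)
  moreover have "\<forall>j\<in>bits \<times> bits. mu \<pi> \<chi> j = q j"
    using mix by (simp add: mu_bits \<pi>_def \<chi>_def)
  moreover have "chi2 \<chi> 1 1 = S"
    using x_mass by (simp add: chi2_eq_sum_fibre \<chi>_def)
  moreover have "\<pi> 1 = P"
    by (simp add: \<pi>_def)
  ultimately show ?thesis
    by blast
qed

theorem lemma7:
  fixes q :: "nat \<times> nat \<Rightarrow> real"
  assumes "prob_dens (bits \<times> bits) q"
  defines "E \<equiv> {(\<pi> 1, chi2 \<chi> 1 1) | \<pi> \<chi>.
                   (\<pi>, \<chi>) \<in> Theta2 \<and> (\<forall>j\<in>bits \<times> bits. mu \<pi> \<chi> j = q j)}"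
  shows "E \<noteq> {} \<and>
         E = {(Pr, Se2). Pr \<in> {0..1} \<and> Se2 \<in> {0..1} \<and>
                Pr - (q (0,0) + q (1,0)) \<le> Pr * Se2 \<and> Pr * Se2 \<le> q (0,1) + q (1,1)}"
proof -
  let ?R = "{(Pr, Se2). Pr \<in> {0..1} \<and> Se2 \<in> {0..1} \<and>
              Pr - (q (0,0) + q (1,0)) \<le> Pr * Se2 \<and> Pr * Se2 \<le> q (0,1) + q (1,1)}"
  have "E \<subseteq> ?R"
    using identified_set_necessary by (auto simp: E_def)
  moreover have "?R \<subseteq> E"
    unfolding E_def by (blast dest: identified_set_sufficient[OF assms(1)])
  moreover have "(0, 0) \<in> ?R"
    using assms(1) by (simp add: prob_dens_def bits_times_bits)
  ultimately show ?thesis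
    by blast
qed

end
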